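(* Let $n\in\mathbb{N}$ and $\beta>1$. Then $R_{\mathcal{S}^*_{Ne,n}}(\mathcal{M}_n(\beta))=(3\beta-2)^{-1/n}$, and the result is sharp for $f(z)=z(1-z^n)^{2(\beta-1)/n}$.
   Context: $\mathbb{D}=\{|z|<1\}$, $\mathbb{D}_r=\{|z|<r\}$. For $n\in\mathbb{N}$, $\mathcal{A}_n$ is the class of analytic functions on $\mathbb{D}$ of the form $f(z)=z+\sum_{k\ge n+1}a_kz^k$; for such $f$ let $\mathcal{Q}_f(z)=zf'(z)/f(z)$. For $\beta>1$, $\mathcal{M}_n(\beta)=\{f\in\mathcal{A}_n:\mathrm{Re}\,\mathcal{Q}_f(z)<\beta,\ z\in\mathbb{D}\}$ (equivalently $\mathcal{Q}_f\prec\frac{1+(1-2\beta)z^n}{1-z^n}$). Let $\varphi_{Ne}(z)=1+z-z^3/3$ (univalent on $\mathbb{D}$), $\Omega_{Ne}=\varphi_{Ne}(\mathbb{D})$, $\mathcal{S}^*_{Ne}$ the set of $f$ ($f(0)=0,f'(0)=1$) with $\mathcal{Q}_f\prec\varphi_{Ne}$ (subordination: $\mathcal{Q}_f=\varphi_{Ne}\circ w$, $w:\mathbb{D}\to\mathbb{D}$ analytic, $w(0)=0$), $\mathcal{S}^*_{Ne,n}=\mathcal{S}^*_{Ne}\cap\mathcal{A}_n$. For $\mathcal{G}\subset\mathcal{A}_n$, $R_{\mathcal{S}^*_{Ne,n}}(\mathcal{G})$ is the largest $\rho\in(0,1]$ such that $\mathcal{Q}_f(\mathbb{D}_\rho)\subseteq\Omega_{Ne}$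 for all $f\in\mathcal{G}$. Sharpness means the stated $f$ lies in $\mathcal{M}_n(\beta)$ and $\mathcal{Q}_f(\partial\mathbb{D}_\rho)\cap\partial\Omega_{Ne}\ne\emptyset$. *)

theory Defs
  imports "HOL-Analysis.Analysis"
begin

definition A_class :: "nat \<Rightarrow> (complex \<Rightarrow> complex) set" where
  "A_class n = {f. f holomorphic_on ball 0 1 \<and>
     (\<exists>a::nat \<Rightarrow> complex. a 0 = 0 \<and> a 1 = 1 \<and> (\<forall>k. 2 \<le> k \<and> k \<le> n \<longrightarrow> a k = 0) \<and>
        (\<forall>z \<in> ball 0 1. (\<lambda>k. a k * z ^ k) sums f z))}"

text \<open>Q_f z = z f'(z) / f(z), with its removable value 1 at the origin.\<close>
definition Qf :: "(complex \<Rightarrow> complex) \<Rightarrow> complex \<Rightarrow> complex" where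
  "Qf f z = (if z = 0 then 1 else z * deriv f z / f z)"

definition M_class :: "nat \<Rightarrow> real \<Rightarrow> (complex \<Rightarrow> complex) set" where
  "M_class n \<beta> = {f \<in> A_class n. (\<forall>z \<in> ball 0 1. z \<noteq> 0 \<longrightarrow> f z \<noteq> 0) \<and>
                     (\<forall>z \<in> ball 0 1. Re (Qf f z) < \<beta>)}"

definition phiNe :: "complex \<Rightarrow> complex" where
  "phiNe z = 1 + z - z ^ 3 / 3"

definition OmegaNe :: "complex set" where
  "OmegaNe = phiNe ` ball 0 1"

definition radius_Ne :: "(complex \<Rightarrow> complex) set \<Rightarrow> real" where
  "radius_Ne G = (GREATEST \<rho>. \<rho> \<in> {0<..1} \<and> (\<forall>f \<in> G. Qf f ` ball 0 \<rho> \<subseteq> OmegaNe))"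

end

theory Submission
  imports Defs "HOL-Complex_Analysis.Complex_Analysis"
begin

text \<open>For f in M_n(beta), the function p = Q_f - 1 vanishes to order n at 0 and has
  Re p < beta - 1, so p/(2 beta - 2 - p) maps the disc into itself with a zero of order n.
  The Schwarz lemma for such maps gives |Q_f(z) - 1| <= (2 beta - 2) r^n / (1 - r^n) on |z| = r,
  which is below 2/3 exactly when r^n < 1/(3 beta - 2); and the disc of radius 2/3 about 1 lies
  in Omega_Ne. Conversely, the extremal function has Q_f(z) = 1 - 2(beta - 1) z^n/(1 - z^n), which
  takes the value 1/3 at z = (3 beta - 2)^(-1/n), and 1/3 = phi_Ne(-1) is a boundary point of
  Omega_Ne not attained inside.\<close>

lemma powser_eq_partial_sum_plus_power_mult:
  fixes a :: "nat \<Rightarrow> complex"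
  assumes sums: "\<forall>z \<in> ball 0 1. (\<lambda>k. a k * z ^ k) sums f z"
  obtains G where "G holomorphic_on ball 0 1"
    and "\<And>z. z \<in> ball 0 1 \<Longrightarrow> f z = (\<Sum>k<m. a k * z ^ k) + z ^ m * G z"
proof -
  define c where "c k = a (k + m)" for k
  have summable_c: "summable (\<lambda>k. c k * z ^ k)" if "norm z < 1" for z :: complex
  proof (cases "z = 0")
    case False
    have "summable (\<lambda>k. a k * z ^ k)"
      using sums that by (auto intro: sums_summable)
    then have "summable (\<lambda>k. a (k + m) * z ^ (k + m) * (1 / z ^ m))"
      by (intro summable_mult2 summable_ignore_initial_segment)
    also have "(\<lambda>k. a (k + m) * z ^ (k + m) * (1 / z ^ m)) = (\<lambda>k. c k * z ^ k)"
      using False by (auto simp: c_def power_add)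
    finally show ?thesis .
  qed (simp add: summable_0_powser)
  define G where "G z = (\<Sum>k. c k * z ^ k)" for z
  have "G holomorphic_on ball 0 1"
    unfolding holomorphic_on_open[OF open_ball] G_def
    using termdiffs_strong'[of 1 c] summable_c by (metis dist_0_norm mem_ball)
  moreover have "f z = (\<Sum>k<m. a k * z ^ k) + z ^ m * G z" if z: "z \<in> ball 0 1" for z
  proof -
    have "(\<lambda>k. a (k + m) * z ^ (k + m)) sums (f z - (\<Sum>k<m. a k * z ^ k))"
      using sums z sums_iff_shift[of "\<lambda>k. a k * z ^ k" m] by simp
    moreover have "(\<lambda>k. z ^ m * (c k * z ^ k)) sums (z ^ m * G z)"
      unfolding G_def using summable_c[of z] z by (intro sums_mult summable_sums) auto
    ultimately have "f z - (\<Sum>k<m. a k * z ^ k) = z ^ m * G z"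
      by (simp add: c_def power_add mult_ac sums_unique2)
    then show ?thesis by (simp add: algebra_simps)
  qed
  ultimately show ?thesis using that by blast
qed

lemma A_class_eq_plus_power_mult:
  assumes "f \<in> A_class n" "n \<ge> 1"
  obtains G where "G holomorphic_on ball 0 1"
    and "\<And>z. z \<in> ball 0 1 \<Longrightarrow> f z = z + z ^ (n + 1) * G z"
proof -
  obtain a where a01: "a 0 = 0" "a 1 = 1" and a_gap: "\<forall>k. 2 \<le> k \<and> k \<le> n \<longrightarrow> a k = 0"
    and sums: "\<forall>z \<in> ball 0 1. (\<lambda>k. a k * z ^ k) sums f z"
    using assms(1) unfolding A_class_def by blast
  have "(\<Sum>k<n + 1. a k * z ^ k) = (\<Sum>k<n + 1. if k = 1 then z else 0)" for z :: complex
  proof (rule sum.cong)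
    fix k assume "k \<in> {..<n + 1}"
    then show "a k * z ^ k = (if k = 1 then z else 0)"
      using a01 a_gap by (cases "k = 0"; cases "k = 1") auto
  qed simp
  then have "(\<Sum>k<n + 1. a k * z ^ k) = z" for z :: complex
    using assms(2) by simp
  then show ?thesis
    using powser_eq_partial_sum_plus_power_mult[OF sums, of "n + 1"] that by metis
qed

lemma Qf_M_class_eq_one_plus_power_mult:
  assumes "f \<in> M_class n \<beta>" "n \<ge> 1"
  obtains K where "K holomorphic_on ball 0 1"
    and "\<And>z. z \<in> ball 0 1 \<Longrightarrow> Qf f z = 1 + z ^ n * K z"
proof -
  have fA: "f \<in> A_class n" and f_nz: "\<forall>z \<in> ball 0 1. z \<noteq> 0 \<longrightarrow> f z \<noteq> 0"
    using assms(1) unfolding M_class_def by auto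
  obtain G where G: "G holomorphic_on ball 0 1"
    and fG: "\<And>z. z \<in> ball 0 1 \<Longrightarrow> f z = z + z ^ (n + 1) * G z"
    using A_class_eq_plus_power_mult[OF fA assms(2)] by blast
  define g where "g z = 1 + z ^ n * G z" for z
  have f_eq: "f z = z * g z" if "z \<in> ball 0 1" for z
    using fG[OF that] by (simp add: g_def algebra_simps)
  have g_nz: "g z \<noteq> 0" if "z \<in> ball 0 1" for z
    using assms(2) f_nz f_eq[OF that] that by (cases "z = 0") (auto simp: g_def power_0_left)
  define g' where "g' z = of_nat n * z ^ (n - 1) * G z + z ^ n * deriv G z" for z
  have f_deriv: "(f has_field_derivative g z + z * g' z) (at z)" if z: "z \<in> ball 0 1" for z
  proof (rule has_field_derivative_transform_within_open[OF _ open_ball z])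
    show "((\<lambda>z. z * g z) has_field_derivative g z + z * g' z) (at z)"
      using holomorphic_derivI[OF G open_ball z] unfolding g_def g'_def
      by (auto intro!: derivative_eq_intros)
  qed (use f_eq in simp)
  define K where "K z = (of_nat n * G z + z * deriv G z) / g z" for z
  have "K holomorphic_on ball 0 1"
    unfolding K_def using G g_nz unfolding g_def
    by (intro holomorphic_intros holomorphic_deriv) auto
  moreover have "Qf f z = 1 + z ^ n * K z" if z: "z \<in> ball 0 1" for z
  proof (cases "z = 0")
    case False
    have pow: "z * z ^ (n - 1) = z ^ n"
      using assms(2) by (simp flip: power_Suc)
    have "Qf f z = z * (g z + z * g' z) / (z * g z)"
      using False DERIV_imp_deriv[OF f_deriv[OF z]] by (simp add: Qf_def f_eq[OF z])
    also have "\<dots> = 1 + z ^ n * K z"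
      using False g_nz[OF z] pow by (simp add: K_def g'_def field_simps)
    finally show ?thesis .
  qed (use assms(2) in \<open>simp add: Qf_def\<close>)
  ultimately show ?thesis using that by blast
qed

lemma norm_le_one_of_power_mult_bounded:
  fixes \<psi> :: "complex \<Rightarrow> complex"
  assumes hol: "\<psi> holomorphic_on ball 0 1"
    and bound: "\<And>w. w \<in> ball 0 1 \<Longrightarrow> norm (w ^ n * \<psi> w) < 1"
    and z: "z \<in> ball 0 1"
  shows "norm (\<psi> z) \<le> 1"
proof -
  have "norm (\<psi> z) * s ^ n \<le> 1" if s: "norm z < s" "s < 1" for s
  proof -
    have s0: "s > 0" using s(1) norm_ge_zero[of z] by linarith
    have "norm (\<psi> z) \<le> 1 / s ^ n"
    proof (rule maximum_modulus_frontier[of \<psi> "cball 0 s"])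
      show "\<psi> holomorphic_on interior (cball 0 s)"
        using hol s by (auto intro: holomorphic_on_subset)
      show "continuous_on (closure (cball 0 s)) \<psi>"
        using holomorphic_on_imp_continuous_on[OF hol] s by (auto intro: continuous_on_subset)
      fix w :: complex assume "w \<in> frontier (cball 0 s)"
      then have "norm w = s" "w \<in> ball 0 1" using s by auto
      then show "norm (\<psi> w) \<le> 1 / s ^ n"
        using bound[of w] s0 by (simp add: norm_mult norm_power field_simps)
    qed (use s in auto)
    then show ?thesis using s0 by (simp add: field_simps)
  qed
  moreover have "((\<lambda>s. norm (\<psi> z) * s ^ n) \<longlongrightarrow> norm (\<psi> z) * 1 ^ n) (at_left 1)"
    by (intro tendsto_intros)
  moreover have "\<forall>\<^sub>F s in at_left 1. norm z < s \<and> s < 1"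
    using z eventually_at_left_real[of "norm z" 1] by (simp add: eventually_at_left_real)
  ultimately show ?thesis
    by (intro tendsto_upperbound[where F = "at_left (1::real)"]) (auto elim: eventually_mono)
qed

lemma norm_less_norm_diff_of_Re_less:
  fixes q :: complex
  assumes "b > 0" "Re q < b / 2"
  shows "norm q < norm (complex_of_real b - q)"
proof -
  have "norm q ^ 2 < norm (complex_of_real b - q) ^ 2"
    unfolding cmod_power2 using assms by (simp add: power2_eq_square algebra_simps)
  then show ?thesis by (simp add: power_less_imp_less_base)
qed

lemma M_class_Qf_bound:
  assumes "f \<in> M_class n \<beta>" "n \<ge> 1" "z \<in> ball 0 1"
  shows "norm (Qf f z - 1) * (1 - norm z ^ n) \<le> (2 * \<beta> - 2) * norm z ^ n"
proof -
  obtain K where K: "K holomorphic_on ball 0 1"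
    and QK: "\<And>z. z \<in> ball 0 1 \<Longrightarrow> Qf f z = 1 + z ^ n * K z"
    using Qf_M_class_eq_one_plus_power_mult[OF assms(1,2)] by blast
  define D where "D z = complex_of_real (2 * \<beta> - 2) - z ^ n * K z" for z
  have "Re (Qf f 0) < \<beta>"
    using assms(1) unfolding M_class_def by simp
  then have "\<beta> > 1" by (simp add: Qf_def)
  have less_D: "norm (w ^ n * K w) < norm (D w)" if "w \<in> ball 0 1" for w
  proof -
    have "Re (Qf f w) < \<beta>" using assms(1) that unfolding M_class_def by blast
    then show ?thesis
      using \<open>\<beta> > 1\<close> QK[OF that] unfolding D_def
      by (intro norm_less_norm_diff_of_Re_less) auto
  qed
  then have D_nz: "D w \<noteq> 0" if "w \<in> ball 0 1" for w
    using that by fastforce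
  have "(\<lambda>w. K w / D w) holomorphic_on ball 0 1"
    using K D_nz unfolding D_def by (intro holomorphic_intros) auto
  then have "norm (K z / D z) \<le> 1"
    using less_D D_nz assms(3)
    by (intro norm_le_one_of_power_mult_bounded[where n = n])
      (auto simp: norm_mult norm_divide norm_power divide_simps)
  then have "norm (z ^ n * K z) \<le> norm z ^ n * norm (D z)"
    using D_nz[OF assms(3)] by (simp add: norm_mult norm_power norm_divide divide_simps mult_left_mono)
  also have "norm (D z) \<le> norm (complex_of_real (2 * \<beta> - 2)) + norm (z ^ n * K z)"
    unfolding D_def by (rule norm_triangle_ineq4)
  also have "norm (complex_of_real (2 * \<beta> - 2)) = 2 * \<beta> - 2"
    using \<open>\<beta> > 1\<close> by (simp only: norm_of_real)
  finally have "norm (z ^ n * K z) \<le> norm z ^ n * (2 * \<beta> - 2 + norm (z ^ n * K z))"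
    by (simp add: mult_left_mono)
  then show ?thesis
    using QK[OF assms(3)] \<open>\<beta> > 1\<close> by (simp add: algebra_simps)
qed

text \<open>For |c| < 2/3 the map u \<mapsto> c + u^3/3 sends the closed disc of radius 3|c|/2 < 1
  into itself; a Brouwer fixed point u solves phi_Ne(u) = 1 + c.\<close>

lemma one_plus_in_OmegaNe:
  fixes c :: complex
  assumes "norm c < 2 / 3"
  shows "1 + c \<in> OmegaNe"
proof -
  define R where "R = max (3 / 2 * norm c) (1 / 2)"
  have R: "0 < R" "R < 1" "norm c \<le> 2 / 3 * R"
    using assms by (auto simp: R_def)
  have R_cube: "R ^ 3 \<le> R"
    using R power_decreasing[of 1 3 R] by simp
  define T where "T u = c + u ^ 3 / 3" for u :: complex
  have "continuous_on (cball 0 R) T" unfolding T_def by (intro continuous_intros) auto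
  moreover have "T \<in> cball 0 R \<rightarrow> cball 0 R"
  proof
    fix u :: complex assume "u \<in> cball 0 R"
    then have "norm u ^ 3 \<le> R ^ 3" by (simp add: power_mono)
    moreover have "norm (T u) \<le> norm c + norm u ^ 3 / 3"
      unfolding T_def using norm_triangle_ineq[of c "u ^ 3 / 3"] by (simp add: norm_power)
    ultimately have "norm (T u) \<le> R" using R R_cube by linarith
    then show "T u \<in> cball 0 R" by simp
  qed
  ultimately obtain u where u: "u \<in> cball 0 R" "T u = u"
    using brouwer_ball[OF R(1)] by blast
  then have "phiNe u = 1 + c" "u \<in> ball 0 1"
    using R by (auto simp: phiNe_def T_def algebra_simps)
  then show ?thesis unfolding OmegaNe_def by (metis image_eqI)
qed

lemma one_third_not_in_OmegaNe: "(1 / 3 :: complex) \<notin> OmegaNe"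
proof
  assume "(1 / 3 :: complex) \<in> OmegaNe"
  then obtain u where u: "norm u < 1" "phiNe u = 1 / 3" unfolding OmegaNe_def by auto
  then have "3 * u ^ 3 = 3 * (2 + 3 * u)"
    by (simp add: phiNe_def field_simps)
  then have "(u + 1) ^ 2 * (u - 2) = 0"
    by algebra
  then have "u = -1 \<or> u = 2" by (auto simp: eq_neg_iff_add_eq_0)
  then show False using u(1) by auto
qed

lemma one_third_in_closure_OmegaNe: "(1 / 3 :: complex) \<in> closure OmegaNe"
proof -
  have "phiNe ` closure (ball 0 1) \<subseteq> closure OmegaNe"
    unfolding OmegaNe_def phiNe_def
    by (intro image_closure_subset continuous_intros closure_subset) auto
  moreover have "phiNe (-1) = 1 / 3" by (simp add: phiNe_def)
  ultimately show ?thesis by force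
qed

lemma one_third_in_frontier_OmegaNe: "(1 / 3 :: complex) \<in> frontier OmegaNe"
  using one_third_in_closure_OmegaNe one_third_not_in_OmegaNe interior_subset
  unfolding frontier_def by blast

definition Ne_extremal :: "nat \<Rightarrow> complex \<Rightarrow> complex \<Rightarrow> complex" where
  "Ne_extremal n e z = z * (1 - z ^ n) powr e"

lemma Re_one_minus_pos: "norm (w :: complex) < 1 \<Longrightarrow> 0 < Re (1 - w)"
  using complex_Re_le_cmod[of w] by simp

lemma one_minus_power_notin_nonpos_Reals:
  fixes z :: complex
  assumes "z \<in> ball 0 1" "n \<ge> 1"
  shows "1 - z ^ n \<notin> \<real>\<^sub>\<le>\<^sub>0"
proof -
  have "norm (z ^ n) < 1"
    using assms by (simp add: norm_power power_less_one_iff)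
  from Re_one_minus_pos[OF this] show ?thesis
    by (auto simp: complex_nonpos_Reals_iff)
qed

lemma Ne_extremal_has_field_derivative:
  assumes "z \<in> ball 0 1" "n \<ge> 1"
  shows "(Ne_extremal n e has_field_derivative
     (1 - z ^ n) powr e * (1 - e * of_nat n * z ^ n / (1 - z ^ n))) (at z)"
proof -
  have slit: "1 - z ^ n \<notin> \<real>\<^sub>\<le>\<^sub>0"
    using one_minus_power_notin_nonpos_Reals[OF assms] .
  then have nz: "1 - z ^ n \<noteq> 0" by auto
  have "(1 - z ^ n) powr (e - 1) = (1 - z ^ n) powr e / (1 - z ^ n)"
    using nz by (simp add: powr_def left_diff_distrib exp_diff)
  then have "(Ne_extremal n e has_field_derivative (1 - z ^ n) powr e +
      z * (e * ((1 - z ^ n) powr e / (1 - z ^ n)) * - (of_nat n * z ^ (n - 1)))) (at z)"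
    unfolding Ne_extremal_def[abs_def] using slit by (auto intro!: derivative_eq_intros)
  moreover obtain m where "n = Suc m"
    using assms(2) by (cases n) auto
  ultimately show ?thesis
    using nz by (simp add: field_simps)
qed

lemma Qf_Ne_extremal:
  assumes "z \<in> ball 0 1" "n \<ge> 1"
  shows "Qf (Ne_extremal n e) z = 1 - e * of_nat n * z ^ n / (1 - z ^ n)"
proof (cases "z = 0")
  case False
  have "(1 - z ^ n) powr e \<noteq> 0"
    using one_minus_power_notin_nonpos_Reals[OF assms] by (auto simp: powr_def)
  then show ?thesis
    using False DERIV_imp_deriv[OF Ne_extremal_has_field_derivative[OF assms]]
    by (simp add: Qf_def Ne_extremal_def)
qed (use assms(2) in \<open>simp add: Qf_def\<close>)

lemma Ne_extremal_in_A_class: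
  assumes "n \<ge> 1"
  shows "Ne_extremal n e \<in> A_class n"
proof -
  have hol: "Ne_extremal n e holomorphic_on ball 0 1"
    unfolding Ne_extremal_def[abs_def] using one_minus_power_notin_nonpos_Reals[OF _ assms]
    by (intro holomorphic_intros) auto
  define a where "a k = (if k \<ge> 1 \<and> n dvd (k - 1)
    then (e gchoose ((k - 1) div n)) * (-1) ^ ((k - 1) div n) else 0)" for k
  have a01: "a 0 = 0" "a 1 = 1" by (simp_all add: a_def)
  have a_gap: "a k = 0" if "2 \<le> k" "k \<le> n" for k
    using that dvd_imp_le[of n "k - 1"] by (auto simp: a_def)
  have "(\<lambda>k. a k * z ^ k) sums Ne_extremal n e z" if z: "z \<in> ball 0 1" for z
  proof -
    have "norm (- (z ^ n)) < 1"
      using z assms by (simp add: norm_power power_less_one_iff)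
    from sums_mult[OF gen_binomial_complex[OF this, of e], of z]
    have "(\<lambda>j. z * ((e gchoose j) * (- (z ^ n)) ^ j)) sums Ne_extremal n e z"
      by (simp add: Ne_extremal_def)
    also have "(\<lambda>j. z * ((e gchoose j) * (- (z ^ n)) ^ j)) = (\<lambda>j. a (n * j + 1) * z ^ (n * j + 1))"
      using assms by (auto simp: a_def power_minus[of "z ^ n"] mult_ac simp flip: power_mult)
    finally have "(\<lambda>j. a (n * j + 1) * z ^ (n * j + 1)) sums Ne_extremal n e z" .
    moreover have "strict_mono (\<lambda>j. n * j + 1)"
      using assms by (auto simp: strict_mono_def)
    moreover have "a k = 0" if "k \<notin> range (\<lambda>j. n * j + 1)" for k
    proof -
      have "\<not> (1 \<le> k \<and> n dvd (k - 1))"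
      proof
        assume "1 \<le> k \<and> n dvd (k - 1)"
        then obtain j where "k - 1 = n * j" "1 \<le> k" by (auto elim!: dvdE)
        then have "k = n * j + 1" by simp
        with that show False by blast
      qed
      then show ?thesis unfolding a_def by argo
    qed
    ultimately show ?thesis
      by (subst sums_mono_reindex[symmetric]) auto
  qed
  with hol show ?thesis
    unfolding A_class_def using a01 a_gap by blast
qed

lemma Re_div_one_minus_gt:
  fixes u :: complex
  assumes "norm u < 1"
  shows "Re (u / (1 - u)) > - 1 / 2"
proof -
  define v where "v = 1 - u"
  have "v \<noteq> 0" using assms by (auto simp: v_def)
  have "norm u ^ 2 < 1" using assms by (simp add: power_less_one_iff)
  then have "(Re v)\<^sup>2 + (Im v)\<^sup>2 < 2 * Re v"
    unfolding v_def cmod_power2 by (simp add: power2_eq_square algebra_simps)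
  moreover have "(Re v)\<^sup>2 + (Im v)\<^sup>2 > 0"
    using \<open>v \<noteq> 0\<close> by (simp flip: cmod_power2)
  ultimately have "Re v / ((Re v)\<^sup>2 + (Im v)\<^sup>2) > 1 / 2"
    by (simp add: field_simps)
  moreover have "u / (1 - u) = 1 / v - 1"
    using \<open>v \<noteq> 0\<close> by (simp add: v_def field_simps)
  then have "Re (u / (1 - u)) = Re v / ((Re v)\<^sup>2 + (Im v)\<^sup>2) - 1"
    by (simp add: Re_divide cmod_power2)
  ultimately show ?thesis
    by linarith
qed

lemma Ne_extremal_in_M_class:
  assumes "n \<ge> 1" "\<beta> > 1"
  shows "Ne_extremal n (complex_of_real (2 * (\<beta> - 1) / real n)) \<in> M_class n \<beta>"
proof -
  define c where "c = 2 * (\<beta> - 1)"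
  define e where "e = complex_of_real (c / real n)"
  have e_n: "e * of_nat n = complex_of_real c"
    using assms(1) unfolding e_def by simp
  have "Re (Qf (Ne_extremal n e) z) < \<beta>" if z: "z \<in> ball 0 1" for z
  proof -
    define w where "w = z ^ n / (1 - z ^ n)"
    have "norm (z ^ n) < 1"
      using z assms(1) by (simp add: norm_power power_less_one_iff)
    from Re_div_one_minus_gt[OF this] have "0 < c * (1 + 2 * Re w)"
      using assms(2) unfolding c_def w_def by (intro mult_pos_pos) auto
    moreover have "Qf (Ne_extremal n e) z = 1 - complex_of_real c * w"
      using Qf_Ne_extremal[OF z assms(1)] e_n by (simp add: w_def)
    then have "Re (Qf (Ne_extremal n e) z) = 1 - c * Re w"
      by simp
    ultimately show ?thesis
      unfolding c_def by (simp add: algebra_simps)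
  qed
  moreover have "Ne_extremal n e z \<noteq> 0" if "z \<in> ball 0 1" "z \<noteq> 0" for z
    using that one_minus_power_notin_nonpos_Reals[OF that(1) assms(1)]
    by (auto simp: Ne_extremal_def powr_def)
  ultimately show ?thesis
    using Ne_extremal_in_A_class[OF assms(1)] unfolding M_class_def e_def c_def by blast
qed

lemma powr_minus_inverse_nat:
  fixes a :: real
  assumes "a > 1" "n \<ge> 1"
  shows "0 < a powr (- 1 / real n)" "a powr (- 1 / real n) < 1"
    and "(a powr (- 1 / real n)) ^ n = 1 / a"
proof -
  show "0 < a powr (- 1 / real n)" "a powr (- 1 / real n) < 1"
    using assms by (auto intro: powr_less_one)
  have "(a powr (- 1 / real n)) ^ n = a powr (- 1 / real n * real n)"
    using assms by (simp add: powr_realpow [symmetric] powr_powr)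
  then show "(a powr (- 1 / real n)) ^ n = 1 / a"
    using assms by (simp add: powr_minus divide_inverse)
qed

lemma Qf_Ne_extremal_eq_one_third:
  assumes "n \<ge> 1" "\<beta> > 1"
  shows "Qf (Ne_extremal n (complex_of_real (2 * (\<beta> - 1) / real n)))
    (complex_of_real ((3 * \<beta> - 2) powr (- 1 / real n))) = 1 / 3"
proof -
  define r where "r = (3 * \<beta> - 2) powr (- 1 / real n)"
  have r: "0 < r" "r < 1" "r ^ n = 1 / (3 * \<beta> - 2)"
    using powr_minus_inverse_nat[of "3 * \<beta> - 2" n] assms unfolding r_def by auto
  have r_quot: "r ^ n / (1 - r ^ n) = 1 / (3 * (\<beta> - 1))"
    unfolding r(3) using assms(2) by (simp add: field_simps)
  have "complex_of_real r \<in> ball 0 1" using r by simp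
  from Qf_Ne_extremal[OF this assms(1)]
  have "Qf (Ne_extremal n (complex_of_real (2 * (\<beta> - 1) / real n))) (complex_of_real r)
      = complex_of_real (1 - 2 * (\<beta> - 1) / real n * real n * r ^ n / (1 - r ^ n))"
    by simp
  also have "1 - 2 * (\<beta> - 1) / real n * real n * r ^ n / (1 - r ^ n)
      = 1 - 2 * (\<beta> - 1) * (r ^ n / (1 - r ^ n))"
    using assms(1) by simp
  also have "\<dots> = 1 / 3"
    unfolding r_quot using assms(2) by (simp add: field_simps)
  finally show ?thesis unfolding r_def by simp
qed

lemma Qf_M_class_in_OmegaNe:
  assumes "f \<in> M_class n \<beta>" "n \<ge> 1" "\<beta> > 1" "norm z ^ n < 1 / (3 * \<beta> - 2)"
  shows "Qf f z \<in> OmegaNe"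
proof -
  define t where "t = norm z ^ n"
  have t: "t * (3 * \<beta> - 2) < 1"
    using assms(3,4) by (simp add: t_def field_simps)
  moreover have "t \<le> t * (3 * \<beta> - 2)"
    using mult_left_mono[of 1 "3 * \<beta> - 2" t] assms(3) by (simp add: t_def)
  ultimately have "t < 1" by linarith
  then have "z \<in> ball 0 1"
    using assms(2) by (simp add: t_def power_less_one_iff)
  from M_class_Qf_bound[OF assms(1,2) this]
  have "norm (Qf f z - 1) * (1 - t) \<le> (2 * \<beta> - 2) * t" by (simp add: t_def)
  also have "\<dots> < 2 / 3 * (1 - t)" using t by (simp add: algebra_simps)
  finally have "norm (Qf f z - 1) < 2 / 3"
    by (rule mult_right_less_imp_less) (use \<open>t < 1\<close> in simp)
  from one_plus_in_OmegaNe[OF this] show ?thesis by simp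
qed

lemma radius_Ne_eqI:
  assumes "0 < r" "r \<le> 1" "\<And>f. f \<in> G \<Longrightarrow> Qf f ` ball 0 r \<subseteq> OmegaNe"
    and "f \<in> G" "norm z = r" "Qf f z \<notin> OmegaNe"
  shows "radius_Ne G = r"
  unfolding radius_Ne_def
proof (rule Greatest_equality)
  fix \<rho> assume "\<rho> \<in> {0<..1} \<and> (\<forall>f \<in> G. Qf f ` ball 0 \<rho> \<subseteq> OmegaNe)"
  then show "\<rho> \<le> r"
    using assms(4-6) by (metis image_eqI mem_ball_0 not_le subsetD)
qed (use assms(1-3) in auto)

theorem mainTheorem12:
  fixes n :: nat and \<beta> :: real
  assumes "n \<ge> 1" and "\<beta> > 1"
  shows "radius_Ne (M_class n \<beta>) = (3 * \<beta> - 2) powr (- 1 / real n)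
    \<and> (let f = (\<lambda>z::complex. z * (1 - z ^ n) powr complex_of_real (2 * (\<beta> - 1) / real n))
       in f \<in> M_class n \<beta> \<and>
          Qf f ` sphere 0 ((3 * \<beta> - 2) powr (- 1 / real n)) \<inter> frontier OmegaNe \<noteq> {})"
proof -
  define r where "r = (3 * \<beta> - 2) powr (- 1 / real n)"
  define F where "F = Ne_extremal n (complex_of_real (2 * (\<beta> - 1) / real n))"
  have r: "0 < r" "r < 1" "r ^ n = 1 / (3 * \<beta> - 2)"
    using powr_minus_inverse_nat[of "3 * \<beta> - 2" n] assms unfolding r_def by auto
  have F_M: "F \<in> M_class n \<beta>"
    using Ne_extremal_in_M_class[OF assms] unfolding F_def .
  have F_r: "Qf F (complex_of_real r) = 1 / 3"
    using Qf_Ne_extremal_eq_one_third[OF assms] unfolding F_def r_def .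
  have "Qf f z \<in> OmegaNe" if "f \<in> M_class n \<beta>" "z \<in> ball 0 r" for f z
  proof -
    have "norm z ^ n < r ^ n"
      using that(2) assms(1) by (intro power_strict_mono) auto
    with r(3) show ?thesis using Qf_M_class_in_OmegaNe[OF that(1) assms] by simp
  qed
  moreover have "Qf F (complex_of_real r) \<notin> OmegaNe"
    unfolding F_r by (rule one_third_not_in_OmegaNe)
  ultimately have "radius_Ne (M_class n \<beta>) = r"
    using r(1,2) F_M by (intro radius_Ne_eqI[where f = F and z = "complex_of_real r"]) auto
  moreover have "1 / 3 \<in> Qf F ` sphere 0 r \<inter> frontier OmegaNe"
    using F_r r one_third_in_frontier_OmegaNe by (auto intro!: image_eqI[of _ _ "of_real r"])
  ultimately show ?thesis
    using F_M unfolding r_def F_def Ne_extremal_def[abs_def] Let_def by blast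
qed

end
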